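(* Assume $P(X_1>0)\in(0,1)$ and $P(X_1<0)\in(0,1)$. Then $I_\delta(x)>0$ for every $x\in(\delta_\mu,\infty]$.
   Context: Let $\{X_i\}_{i\ge1}$ be i.i.d. real-valued with law $\mu$, $M_n(\theta)=\frac1n\sum_{i=1}^ne^{\theta X_i}$. For a probability $\nu$, $f_\nu(\theta)=\int e^{\theta x}\nu(dx)\in(0,\infty]$. Loynes' exponent $\delta_\mu=\sup\{\theta:f_\mu(\theta)\le1\}\in[0,\infty]$. For $f:\mathbb R\to[-\infty,\infty]$, $\mathrm{epi}(f)=\{(\theta,b):b\ge f(\theta)\}$. On $\mathbb R^2$ use the box metric $d$, $d(x,A)=\inf_{y\in A}d(x,y)$, $\overline B_k=\{x:d(0,x)\le k\}$. The Attouch–Wets topology $\tau_{AW}$ has local base at $f$ given by $V_k(f)=\{g:\sup_{x\in\overline B_k}|d(x,\mathrm{epi}(g))-d(x,\mathrm{epi}(f))|<1/k\}$. $\mathcal X_M$ = lower semicontinuous convex $f:\mathbb R\to(0,\infty]$ with $f(0)<\infty$ for which some probability $\nu$ satisfies $f(\theta)=f_\nu(\theta)$ whenever $f(\theta)<\infty$. $I_M$ is the good rate function of the LDP of $\{M_n\}$ in $(\mathcal X_M,\tau_{AW})$: $I_M(f)=-\inf_{G\ni f}\limsup_n\frac1n\log P(M_n\in G)$ over $\tau_{AW}$-open $G\ni f$. $I_\delta:[0,\infty]\to[0,\infty]$ is $I_\delta(x)=\inf_{f\in C_x}I_M(f)$, where for $x\in(0,\infty)$, $C_x=\{f\in\mathcal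 X_M:f(x)=1,\text{ or }f(x)<1\text{ and }f(y)=\infty\ \forall y>x\}$, $C_0=\{f\in\mathcal X_M:f(x)\ge1\ \forall x>0\}$, $C_\infty=\{f\in\mathcal X_M:f(x)\le1\ \forall x\ge0\}$; it is the rate function of the LDP of the estimators $\delta_n=\sup\{\theta:M_n(\theta)\le1\}$. *)

theory Defs
  imports "HOL-Probability.Probability"
begin

definition mgf :: "real measure \<Rightarrow> real \<Rightarrow> ereal" where
  "mgf \<nu> \<theta> = enn2ereal (\<integral>\<^sup>+ x. ennreal (exp (\<theta> * x)) \<partial>\<nu>)"

definition real_prob :: "real measure \<Rightarrow> bool" where
  "real_prob \<nu> \<longleftrightarrow> prob_space \<nu> \<and> sets \<nu> = sets borel"

definition loynes :: "real measure \<Rightarrow> ereal" where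
  "loynes \<mu> = Sup {ereal \<theta> | \<theta>. mgf \<mu> \<theta> \<le> 1}"

definition epi :: "(real \<Rightarrow> ereal) \<Rightarrow> (real \<times> real) set" where
  "epi f = {(\<theta>, b). ereal b \<ge> f \<theta>}"

text \<open>Box metric on R^2 and distance to a set (infimum; +infinity for the empty set).\<close>
definition boxdist :: "real \<times> real \<Rightarrow> real \<times> real \<Rightarrow> real" where
  "boxdist p q = max \<bar>fst p - fst q\<bar> \<bar>snd p - snd q\<bar>"

definition setdist :: "real \<times> real \<Rightarrow> (real \<times> real) set \<Rightarrow> ereal" where
  "setdist p A = (INF q\<in>A. ereal (boxdist p q))"

definition boxball :: "real \<Rightarrow> (real \<times> real) set" where
  "boxball k = {p. boxdist (0, 0) p \<le> k}"

definition AW_nbhd :: "nat \<Rightarrow> (real \<Rightarrow> ereal) \<Rightarrow> (real \<Rightarrow> ereal) set" where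
  "AW_nbhd k f = {g. (SUP p\<in>boxball (real k). \<bar>setdist p (epi g) - setdist p (epi f)\<bar>)
                      < ereal (1 / real k)}"

definition lsc :: "(real \<Rightarrow> ereal) \<Rightarrow> bool" where
  "lsc f \<longleftrightarrow> (\<forall>x c. c < f x \<longrightarrow> (\<forall>\<^sub>F y in at x. c < f y))"

definition convex_fun :: "(real \<Rightarrow> ereal) \<Rightarrow> bool" where
  "convex_fun f \<longleftrightarrow> convex (epi f)"

definition XM :: "(real \<Rightarrow> ereal) set" where
  "XM = {f. lsc f \<and> convex_fun f \<and> (\<forall>\<theta>. 0 < f \<theta>) \<and> f 0 < \<infinity> \<and>
            (\<exists>\<nu>. real_prob \<nu> \<and> (\<forall>\<theta>. f \<theta> < \<infinity> \<longrightarrow> f \<theta> = mgf \<nu> \<theta>))}"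

text \<open>Open sets of the Attouch--Wets topology on X_M (topology generated by the
  local bases V_k(f), k >= 1).\<close>
definition AW_open :: "(real \<Rightarrow> ereal) set \<Rightarrow> bool" where
  "AW_open G \<longleftrightarrow> G \<subseteq> XM \<and> (\<forall>f\<in>G. \<exists>k\<ge>1. AW_nbhd k f \<inter> XM \<subseteq> G)"

definition Mn :: "nat \<Rightarrow> (nat \<Rightarrow> real) \<Rightarrow> real \<Rightarrow> ereal" where
  "Mn n x \<theta> = ereal ((1 / real n) * (\<Sum>i<n. exp (\<theta> * x i)))"

definition probMn :: "real measure \<Rightarrow> nat \<Rightarrow> (real \<Rightarrow> ereal) set \<Rightarrow> real" where
  "probMn \<mu> n G = measure (PiM {..<n} (\<lambda>_. \<mu>))
                     {x \<in> space (PiM {..<n} (\<lambda>_. \<mu>)). Mn n x \<in> G}"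

definition elog :: "real \<Rightarrow> ereal" where
  "elog p = (if p \<le> 0 then - \<infinity> else ereal (ln p))"

definition IM :: "real measure \<Rightarrow> (real \<Rightarrow> ereal) \<Rightarrow> ereal" where
  "IM \<mu> f = - (INF G\<in>{G. AW_open G \<and> f \<in> G}.
                 limsup (\<lambda>n. ereal (1 / real n) * elog (probMn \<mu> n G)))"

definition Cset :: "ereal \<Rightarrow> (real \<Rightarrow> ereal) set" where
  "Cset x = (if x = 0 then {f\<in>XM. \<forall>y>0. f y \<ge> 1}
             else if x = \<infinity> then {f\<in>XM. \<forall>y\<ge>0. f y \<le> 1}
             else {f\<in>XM. f (real_of_ereal x) = 1 \<or>
                          (f (real_of_ereal x) < 1 \<and> (\<forall>y>real_of_ereal x. f y = \<infinity>))})"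

definition Idelta :: "real measure \<Rightarrow> ereal \<Rightarrow> ereal" where
  "Idelta \<mu> x = (INF f\<in>Cset x. IM \<mu> f)"

end

theory Submission
  imports Defs
begin

text \<open>Take \<open>\<delta>\<^sub>\<mu> < t < x\<close>. Every \<open>f \<in> C\<^sub>x\<close> is convex with \<open>f 0 = 1\<close> and \<open>f x \<le> 1\<close>, so \<open>f t \<le> 1\<close>:
  all of \<open>C\<^sub>x\<close> lies in the Attouch--Wets open set \<open>G\<close> of functions whose epigraph comes within
  \<open>r\<close> of \<open>(t, 1)\<close>. On the other hand \<open>f\<^sub>\<mu> t > 1\<close>, so some bounded truncation \<open>h\<close> of \<open>exp (t x)\<close> still
  has mean above \<open>1 + r\<close>; but \<open>M\<^sub>n \<in> G\<close> forces the empirical mean of \<open>h\<close> below \<open>1 + r\<close>, which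
  by Hoeffding's inequality has probability at most \<open>\<rho>\<^sup>n\<close> with \<open>\<rho> < 1\<close>. Hence \<open>I\<^sub>M \<ge> -ln \<rho> > 0\<close>
  on \<open>C\<^sub>x\<close>.\<close>

lemma indep_vars_PiM_components:
  assumes "prob_space M" and "I \<noteq> {}"
  shows "prob_space.indep_vars (PiM I (\<lambda>_. M)) (\<lambda>_. M) (\<lambda>i x. x i) I"
proof -
  interpret P: prob_space "PiM I (\<lambda>_. M)" by (intro prob_space_PiM assms(1))
  have "distr (PiM I (\<lambda>_. M)) (PiM I (\<lambda>_. M)) (\<lambda>x. restrict x I) = PiM I (\<lambda>_. M)"
    by (subst distr_cong[OF refl refl, where g="\<lambda>x. x"])
       (auto simp: space_PiM PiE_def extensional_restrict)
  also have "\<dots> = PiM I (\<lambda>i. distr (PiM I (\<lambda>_. M)) M (\<lambda>x. x i))"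
    by (intro PiM_cong refl) (simp add: distr_PiM_component[OF assms(1)])
  finally show ?thesis
    by (subst P.indep_vars_iff_distr_eq_PiM'[OF assms(2)]) auto
qed

lemma Hoeffding_PiM_lower_tail:
  fixes g :: "'a \<Rightarrow> real"
  assumes M: "prob_space M" and g[measurable]: "g \<in> borel_measurable M"
    and g_bounds: "\<And>x. 0 \<le> g x" "\<And>x. g x \<le> K" and K: "0 < K" and a: "a \<le> integral\<^sup>L M g"
  shows "measure (PiM {..<n} (\<lambda>_. M))
           {x \<in> space (PiM {..<n} (\<lambda>_. M)). (\<Sum>i<n. g (x i)) \<le> real n * a}
         \<le> exp (- 2 * (integral\<^sup>L M g - a)\<^sup>2 / K\<^sup>2) ^ n"
proof -
  let ?P = "PiM {..<n} (\<lambda>_. M)"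
  interpret P: prob_space ?P by (intro prob_space_PiM M)
  show ?thesis
  proof (cases "n = 0")
    case True
    then show ?thesis using P.prob_le_1 by simp
  next
    case False
    have indep: "P.indep_vars (\<lambda>_. borel) (\<lambda>i x. g (x i)) {..<n}"
      using False by (intro P.indep_vars_compose2[OF indep_vars_PiM_components[OF M]]) auto
    have expectation: "P.expectation (\<lambda>x. g (x i)) = integral\<^sup>L M g" if "i < n" for i
      using integral_distr[of "\<lambda>x. x i" ?P M g] distr_PiM_component[of "{..<n}" "\<lambda>_. M" i] M that
      by auto
    interpret Hoeffding_ineq ?P "{..<n}" "\<lambda>i x. g (x i)" "\<lambda>_. 0" "\<lambda>_. K"
      "real n * integral\<^sup>L M g"
      by unfold_locales (auto simp: indep g_bounds expectation)
    have "P.prob {x \<in> space ?P. (\<Sum>i<n. g (x i))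
            \<le> real n * integral\<^sup>L M g - real n * (integral\<^sup>L M g - a)}
        \<le> exp (- 2 * (real n * (integral\<^sup>L M g - a))\<^sup>2 / (\<Sum>i<n. (K - 0)\<^sup>2))"
      using Hoeffding_ineq_le[of "real n * (integral\<^sup>L M g - a)"] a K False by auto
    also have "\<dots> = exp (- 2 * (integral\<^sup>L M g - a)\<^sup>2 / K\<^sup>2) ^ n"
      using False K by (simp add: exp_of_nat_mult[symmetric] power2_eq_square field_simps)
    finally show ?thesis by (simp add: algebra_simps)
  qed
qed

text \<open>The damping term \<open>\<bar>x\<bar> / (j + 1)\<close> makes \<open>exp_trunc t j\<close> a lower bound of every
  \<open>\<lambda>x. exp (t' * x)\<close> with \<open>\<bar>t' - t\<bar> \<le> 1 / (j + 1)\<close>, and the cap \<open>j + 1\<close> makes it bounded.\<close>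

definition exp_trunc :: "real \<Rightarrow> nat \<Rightarrow> real \<Rightarrow> real" where
  "exp_trunc t j x = min (exp (t * x - \<bar>x\<bar> / real (Suc j))) (real (Suc j))"

lemma exp_trunc_measurable[measurable]: "exp_trunc t j \<in> borel_measurable borel"
  unfolding exp_trunc_def by measurable

lemma exp_trunc_nonneg: "0 \<le> exp_trunc t j x"
  unfolding exp_trunc_def by simp

lemma exp_trunc_le_bound: "exp_trunc t j x \<le> real (Suc j)"
  unfolding exp_trunc_def by simp

lemma exp_trunc_le_exp:
  assumes "\<bar>t - t'\<bar> \<le> 1 / real (Suc j)"
  shows "exp_trunc t j x \<le> exp (t' * x)"
proof -
  have "(t - t') * x \<le> \<bar>t - t'\<bar> * \<bar>x\<bar>"
    by (metis abs_ge_self abs_mult)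
  also have "\<dots> \<le> \<bar>x\<bar> / real (Suc j)"
    using mult_right_mono[OF assms, of "\<bar>x\<bar>"] by simp
  finally have "exp (t * x - \<bar>x\<bar> / real (Suc j)) \<le> exp (t' * x)"
    by (simp add: algebra_simps)
  then show ?thesis unfolding exp_trunc_def by linarith
qed

lemma exp_trunc_mono:
  assumes "i \<le> j" shows "exp_trunc t i x \<le> exp_trunc t j x"
proof -
  have "\<bar>x\<bar> / real (Suc j) \<le> \<bar>x\<bar> / real (Suc i)"
    using assms by (intro divide_left_mono) auto
  then show ?thesis
    using assms unfolding exp_trunc_def by (intro min.mono) auto
qed

lemma LIMSEQ_exp_trunc: "(\<lambda>j. exp_trunc t j x) \<longlonglongrightarrow> exp (t * x)"
proof -
  have "(\<lambda>j. exp (t * x - \<bar>x\<bar> * inverse (real (Suc j)))) \<longlonglongrightarrow> exp (t * x - \<bar>x\<bar> * 0)"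
    by (intro tendsto_intros LIMSEQ_inverse_real_of_nat)
  then have "(\<lambda>j. exp (t * x - \<bar>x\<bar> / real (Suc j))) \<longlonglongrightarrow> exp (t * x)"
    by (simp add: divide_inverse)
  moreover obtain N :: nat where N: "exp (t * x) \<le> real N"
    using real_arch_simple by blast
  have "exp (t * x - \<bar>x\<bar> / real (Suc j)) = exp_trunc t j x" if "N \<le> j" for j
  proof -
    have "exp (t * x - \<bar>x\<bar> / real (Suc j)) \<le> exp (t * x)" by simp
    also have "real N \<le> real (Suc j)" using that by simp
    with N have "exp (t * x) \<le> real (Suc j)" by linarith
    finally show ?thesis unfolding exp_trunc_def by simp
  qed
  then have "\<forall>\<^sub>F j in sequentially. exp (t * x - \<bar>x\<bar> / real (Suc j)) = exp_trunc t j x"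
    by (rule eventually_sequentiallyI)
  ultimately show ?thesis
    by (rule Lim_transform_eventually)
qed

lemma SUP_exp_trunc: "(SUP j. ennreal (exp_trunc t j x)) = ennreal (exp (t * x))"
proof (rule LIMSEQ_unique)
  show "(\<lambda>j. ennreal (exp_trunc t j x)) \<longlonglongrightarrow> (SUP j. ennreal (exp_trunc t j x))"
    by (intro LIMSEQ_SUP monoI ennreal_leI exp_trunc_mono)
  show "(\<lambda>j. ennreal (exp_trunc t j x)) \<longlonglongrightarrow> ennreal (exp (t * x))"
    by (intro tendsto_ennrealI LIMSEQ_exp_trunc)
qed

lemma integral_exp_trunc_gt_1:
  assumes "real_prob \<mu>" and "1 < (\<integral>\<^sup>+ x. ennreal (exp (t * x)) \<partial>\<mu>)"
  obtains j where "1 < integral\<^sup>L \<mu> (exp_trunc t j)"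
proof -
  have sets: "sets \<mu> = sets borel" using assms(1) unfolding real_prob_def by blast
  have [measurable]: "exp_trunc t j \<in> borel_measurable \<mu>" for j
    using measurable_cong_sets[OF sets refl] exp_trunc_measurable by blast
  have "(\<integral>\<^sup>+ x. ennreal (exp (t * x)) \<partial>\<mu>) = (SUP j. \<integral>\<^sup>+ x. ennreal (exp_trunc t j x) \<partial>\<mu>)"
    unfolding SUP_exp_trunc[symmetric]
    by (rule nn_integral_monotone_convergence_SUP)
       (auto simp: incseq_def le_fun_def intro!: ennreal_leI exp_trunc_mono)
  then obtain j where j: "1 < (\<integral>\<^sup>+ x. ennreal (exp_trunc t j x) \<partial>\<mu>)"
    using assms(2) by (auto simp: less_SUP_iff)
  interpret prob_space \<mu> using assms(1) unfolding real_prob_def by blast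
  have "integrable \<mu> (exp_trunc t j)"
    by (rule integrable_const_bound[where B="real (Suc j)"])
       (auto intro!: always_eventually simp: exp_trunc_nonneg exp_trunc_le_bound simp del: of_nat_Suc)
  then have "(\<integral>\<^sup>+ x. ennreal (exp_trunc t j x) \<partial>\<mu>) = ennreal (integral\<^sup>L \<mu> (exp_trunc t j))"
    by (intro nn_integral_eq_integral) (simp_all add: exp_trunc_nonneg)
  with j show ?thesis
    by (intro that[of j]) simp
qed

lemma mgf_0:
  assumes "real_prob \<nu>" shows "mgf \<nu> 0 = 1"
proof -
  interpret prob_space \<nu> using assms unfolding real_prob_def by blast
  show ?thesis unfolding mgf_def by (simp add: emeasure_space_1 one_ennreal.rep_eq)
qed

lemma XM_at_0:
  assumes "f \<in> XM" shows "f 0 = 1"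
  using assms mgf_0 unfolding XM_def by force

lemma loynes_nonneg:
  assumes "real_prob \<mu>" shows "0 \<le> loynes \<mu>"
  unfolding loynes_def zero_ereal_def using mgf_0[OF assms] by (intro Sup_upper) auto

lemma nn_integral_exp_gt_1_above_loynes:
  assumes "loynes \<mu> < ereal t"
  shows "1 < (\<integral>\<^sup>+ x. ennreal (exp (t * x)) \<partial>\<mu>)"
proof -
  have "\<not> mgf \<mu> t \<le> 1"
  proof
    assume "mgf \<mu> t \<le> 1"
    then have "ereal t \<le> loynes \<mu>" unfolding loynes_def by (intro Sup_upper) blast
    with assms show False by simp
  qed
  then show ?thesis
    unfolding mgf_def by (simp add: less_ennreal.rep_eq one_ennreal.rep_eq)
qed

lemma Cset_le_1:
  assumes t: "0 \<le> t" "ereal t < x" and f: "f \<in> Cset x"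
  shows "f t \<le> 1"
proof (cases x)
  case PInf
  with f t show ?thesis unfolding Cset_def by auto
next
  case MInf
  with t show ?thesis by simp
next
  case (real x')
  with t have "0 < x'" "t < x'" by auto
  with f real have fX: "f \<in> XM" and fx: "f x' \<le> 1"
    unfolding Cset_def by (auto split: if_splits)
  have "(0, 1) \<in> epi f" "(x', 1) \<in> epi f"
    using XM_at_0[OF fX] fx unfolding epi_def by (simp_all add: one_ereal_def)
  moreover have "convex (epi f)"
    using fX unfolding XM_def convex_fun_def by blast
  ultimately have "(1 - t / x') *\<^sub>R (0, 1) + (t / x') *\<^sub>R (x', 1) \<in> epi f"
    using \<open>0 < x'\<close> \<open>t < x'\<close> t(1) by (intro convexD) auto
  also have "(1 - t / x') *\<^sub>R (0, 1) + (t / x') *\<^sub>R (x', 1) = (t, 1::real)"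
    using \<open>0 < x'\<close> by simp
  finally have "(t, 1) \<in> epi f" .
  then show ?thesis unfolding epi_def by (simp add: one_ereal_def)
qed

lemma setdist_nonneg: "0 \<le> setdist p A"
  unfolding setdist_def boxdist_def by (intro INF_greatest) (auto simp: le_max_iff_disj)

lemma setdist_eq_0_of_mem:
  assumes "p \<in> A" shows "setdist p A = 0"
proof (rule antisym)
  have "setdist p A \<le> ereal (boxdist p p)"
    unfolding setdist_def using assms by (rule INF_lower)
  then show "setdist p A \<le> 0" by (simp add: boxdist_def zero_ereal_def)
qed (rule setdist_nonneg)

lemma setdist_AW_nbhd:
  assumes "p \<in> boxball (real k)" and "g \<in> AW_nbhd k f"
  shows "\<bar>setdist p (epi g) - setdist p (epi f)\<bar> < ereal (1 / real k)"
proof -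
  have "\<bar>setdist p (epi g) - setdist p (epi f)\<bar>
      \<le> (SUP q\<in>boxball (real k). \<bar>setdist q (epi g) - setdist q (epi f)\<bar>)"
    using assms(1) by (rule SUP_upper)
  also have "\<dots> < ereal (1 / real k)"
    using assms(2) unfolding AW_nbhd_def by blast
  finally show ?thesis .
qed

lemma AW_open_setdist_less:
  assumes "0 < r" shows "AW_open {g \<in> XM. setdist p (epi g) < ereal r}"
  unfolding AW_open_def
proof (intro conjI ballI)
  fix f assume f: "f \<in> {g \<in> XM. setdist p (epi g) < ereal r}"
  then obtain d where d: "setdist p (epi f) = ereal d" "d < r"
    using setdist_nonneg[of p "epi f"] by (cases "setdist p (epi f)") auto
  define k where "k = nat \<lceil>boxdist (0, 0) p + 1 / (r - d)\<rceil> + 1"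
  have k: "boxdist (0, 0) p + 1 / (r - d) < real k"
    unfolding k_def by linarith
  have "1 / (r - d) > 0" using d by simp
  with k have "boxdist (0, 0) p \<le> real k" by linarith
  then have p: "p \<in> boxball (real k)"
    unfolding boxball_def by simp
  have "1 / real k < r - d"
  proof -
    have "1 / (r - d) < real k"
      using k by (simp add: boxdist_def)
    moreover have "0 < real k" unfolding k_def by simp
    ultimately show ?thesis
      using d(2) by (simp add: field_simps)
  qed
  then have "setdist p (epi g) < ereal r" if "g \<in> AW_nbhd k f" for g
    using setdist_AW_nbhd[OF p that] d by (cases "setdist p (epi g)") auto
  moreover have "1 \<le> k" unfolding k_def by simp
  ultimately show "\<exists>k\<ge>1. AW_nbhd k f \<inter> XM \<subseteq> {g \<in> XM. setdist p (epi g) < ereal r}"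
    by blast
qed simp

lemma Cset_subset_setdist_less:
  assumes "0 \<le> t" "ereal t < x" and "0 < r"
  shows "Cset x \<subseteq> {g \<in> XM. setdist (t, 1) (epi g) < ereal r}"
proof
  fix f assume f: "f \<in> Cset x"
  have "(t, 1) \<in> epi f"
    using Cset_le_1[OF assms(1,2) f] unfolding epi_def by (simp add: one_ereal_def)
  moreover have "f \<in> XM"
    using f unfolding Cset_def by (auto split: if_splits)
  ultimately show "f \<in> {g \<in> XM. setdist (t, 1) (epi g) < ereal r}"
    using assms(3) by (simp add: setdist_eq_0_of_mem)
qed

lemma sum_exp_trunc_le_of_setdist_less:
  assumes close: "setdist (t, 1) (epi (Mn n x)) < ereal r" and r: "r \<le> 1 / real (Suc j)"
  shows "(\<Sum>i<n. exp_trunc t j (x i)) \<le> real n * (1 + r)"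
proof (cases "n = 0")
  case False
  obtain t' b where epi: "(t', b) \<in> epi (Mn n x)" and near: "boxdist (t, 1) (t', b) < r"
    using close unfolding setdist_def by (auto simp: INF_less_iff)
  have "(\<Sum>i<n. exp_trunc t j (x i)) \<le> (\<Sum>i<n. exp (t' * x i))"
    using near r by (intro sum_mono exp_trunc_le_exp) (simp add: boxdist_def)
  also have "\<dots> \<le> real n * b"
    using epi False unfolding epi_def Mn_def by (simp add: field_simps)
  also have "\<dots> \<le> real n * (1 + r)"
    using near by (intro mult_left_mono) (auto simp: boxdist_def)
  finally show ?thesis .
qed simp

lemma probMn_setdist_less_exponential:
  assumes \<mu>: "real_prob \<mu>" and mgf_gt: "1 < (\<integral>\<^sup>+ x. ennreal (exp (t * x)) \<partial>\<mu>)"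
  obtains r \<rho> where "0 < r" "0 < \<rho>" "\<rho> < 1"
    "\<And>n. probMn \<mu> n {g \<in> XM. setdist (t, 1) (epi g) < ereal r} \<le> \<rho> ^ n"
proof -
  obtain j where j: "1 < integral\<^sup>L \<mu> (exp_trunc t j)"
    using integral_exp_trunc_gt_1[OF \<mu> mgf_gt] .
  define m where "m = integral\<^sup>L \<mu> (exp_trunc t j)"
  define r where "r = min (1 / real (Suc j)) ((m - 1) / 2)"
  define \<rho> where "\<rho> = exp (- 2 * (m - (1 + r))\<^sup>2 / (real (Suc j))\<^sup>2)"
  have "r \<le> (m - 1) / 2" unfolding r_def by (rule min.cobounded2)
  then have r: "0 < r" "r \<le> 1 / real (Suc j)" "1 + r < m"
    using j unfolding r_def m_def by auto
  have M: "prob_space \<mu>" and sets: "sets \<mu> = sets borel"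
    using \<mu> unfolding real_prob_def by auto
  have [measurable]: "exp_trunc t j \<in> borel_measurable \<mu>"
    using measurable_cong_sets[OF sets refl] exp_trunc_measurable by blast
  have "probMn \<mu> n {g \<in> XM. setdist (t, 1) (epi g) < ereal r} \<le> \<rho> ^ n" for n
  proof -
    let ?P = "PiM {..<n} (\<lambda>_. \<mu>)"
    interpret P: prob_space ?P by (intro prob_space_PiM M)
    have "probMn \<mu> n {g \<in> XM. setdist (t, 1) (epi g) < ereal r}
        \<le> measure ?P {x \<in> space ?P. (\<Sum>i<n. exp_trunc t j (x i)) \<le> real n * (1 + r)}"
      unfolding probMn_def
      using sum_exp_trunc_le_of_setdist_less[OF _ r(2)] by (intro P.finite_measure_mono) auto
    also have "\<dots> \<le> \<rho> ^ n"
      using r(3) unfolding \<rho>_def m_def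
      by (intro Hoeffding_PiM_lower_tail[OF M _ exp_trunc_nonneg exp_trunc_le_bound]) auto
    finally show ?thesis .
  qed
  moreover have "0 < \<rho>" "\<rho> < 1"
    using r(3) unfolding \<rho>_def by auto
  ultimately show ?thesis
    using r(1) that by blast
qed

lemma IM_ge_of_exponential_decay:
  assumes G: "AW_open G" "f \<in> G" and \<rho>: "0 < \<rho>" and decay: "\<And>n. probMn \<mu> n G \<le> \<rho> ^ n"
  shows "ereal (- ln \<rho>) \<le> IM \<mu> f"
proof -
  have "ereal (1 / real n) * elog (probMn \<mu> n G) \<le> ereal (ln \<rho>)" if "0 < n" for n
  proof (cases "probMn \<mu> n G \<le> 0")
    case False
    then have "ln (probMn \<mu> n G) \<le> ln (\<rho> ^ n)"
      using decay[of n] by simp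
    also have "\<dots> = real n * ln \<rho>"
      using \<rho> by (simp add: ln_realpow)
    finally have "1 / real n * ln (probMn \<mu> n G) \<le> ln \<rho>"
      using that by (simp add: divide_le_eq mult.commute)
    with False show ?thesis
      by (simp add: elog_def)
  qed (use that in \<open>simp add: elog_def\<close>)
  then have "limsup (\<lambda>n. ereal (1 / real n) * elog (probMn \<mu> n G)) \<le> ereal (ln \<rho>)"
    by (intro Limsup_bounded eventually_sequentiallyI[of 1]) simp
  then have "(INF G\<in>{G. AW_open G \<and> f \<in> G}. limsup (\<lambda>n. ereal (1 / real n) * elog (probMn \<mu> n G)))
      \<le> ereal (ln \<rho>)"
    using G by (intro INF_lower2[of G]) auto
  then show ?thesis
    unfolding IM_def by (simp only: ereal_minus_le_minus uminus_ereal.simps(1)[symmetric])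
qed

theorem mainTheorem17:
  fixes \<mu> :: "real measure"
  assumes "real_prob \<mu>"
    and "0 < measure \<mu> {0<..}" and "measure \<mu> {0<..} < 1"
    and "0 < measure \<mu> {..<0}" and "measure \<mu> {..<0} < 1"
  shows "\<forall>x. loynes \<mu> < x \<longrightarrow> 0 < Idelta \<mu> x"
proof (intro allI impI)
  fix x assume "loynes \<mu> < x"
  then obtain t where t: "loynes \<mu> < ereal t" "ereal t < x"
    using ereal_dense2 by blast
  have "0 \<le> t"
    using loynes_nonneg[OF assms(1)] t(1) by (metis ereal_less_eq(5) order.trans less_imp_le)
  obtain r \<rho> where r: "0 < r" and \<rho>: "0 < \<rho>" "\<rho> < 1"
    and decay: "\<And>n. probMn \<mu> n {g \<in> XM. setdist (t, 1) (epi g) < ereal r} \<le> \<rho> ^ n"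
    using probMn_setdist_less_exponential[OF assms(1) nn_integral_exp_gt_1_above_loynes[OF t(1)]]
    by blast
  have "ereal (- ln \<rho>) \<le> IM \<mu> f" if "f \<in> Cset x" for f
    using Cset_subset_setdist_less[OF \<open>0 \<le> t\<close> t(2) r] that
    by (intro IM_ge_of_exponential_decay[OF AW_open_setdist_less[OF r] _ \<rho>(1) decay]) blast
  then have "ereal (- ln \<rho>) \<le> Idelta \<mu> x"
    unfolding Idelta_def by (rule INF_greatest)
  moreover have "0 < ereal (- ln \<rho>)"
    using \<rho> by simp
  ultimately show "0 < Idelta \<mu> x"
    by (rule less_le_trans[rotated])
qed

end
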